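(* Fix $i\in[1,n]$ and let $\alpha(i,j)=\max\{\beta(i,j),\gamma(i,j)\}$ for $j\in[i,n]$. Let $j'(i)$ be the smallest index $j\in[i,n]$ with $\gamma(i,j)\le\beta(i,j)$ (it exists since $\gamma(i,n)=0\le\beta(i,n)$). Then the minimum of $\alpha(i,j)$ over $j\in[i,n]$ is attained at $j=j'(i)$ or at $j=j'(i)-1$ (the latter only possible when $j'(i)>i$); that is, $\min_{j\in[i,n]}\alpha(i,j)=\min\{\alpha(i,j):j\in\{j'(i)-1,j'(i)\}\cap[i,n]\}$.
   Context: Let $v_1,\dots,v_n$ be points of a metric space with metric $|\cdot|$ (symmetric, nonnegative, $|v_iv_j|=0$ iff $i=j$, triangle inequality). For $i\le j$ let $d_P(v_i,v_j)=\sum_{k=i}^{j-1}|v_kv_{k+1}|$ and $d_P(v_j,v_i)=d_P(v_i,v_j)$. For $1\le i\le j\le n$: $\beta(i,j)=\max_{k\in[i,j]}\min\{d_P(v_i,v_k),|v_iv_j|+d_P(v_k,v_j)\}$; $\gamma(i,j)=|v_iv_j|+d_P(v_j,v_n)$ if $j<n$ and $\gamma(i,n)=0$. Then $\alpha(i,j)$ equals the maximum over $k\in[i,n]$ of the shortest-path distance from $v_i$ to $v_k$ in the path $v_1\cdots v_n$ augmented with an edge $e(v_i,v_j)$ of length $|v_iv_j|$. *)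

theory Defs
  imports Main "HOL-Analysis.Analysis"
begin

definition dP :: "(nat \<Rightarrow> 'a::metric_space) \<Rightarrow> nat \<Rightarrow> nat \<Rightarrow> real" where
  "dP v i j = (if i \<le> j then (\<Sum>k=i..<j. dist (v k) (v (k+1)))
               else (\<Sum>k=j..<i. dist (v k) (v (k+1))))"

definition beta :: "(nat \<Rightarrow> 'a::metric_space) \<Rightarrow> nat \<Rightarrow> nat \<Rightarrow> real" where
  "beta v i j = Max ((\<lambda>k. min (dP v i k) (dist (v i) (v j) + dP v k j)) ` {i..j})"

definition gamma :: "(nat \<Rightarrow> 'a::metric_space) \<Rightarrow> nat \<Rightarrow> nat \<Rightarrow> nat \<Rightarrow> real" where
  "gamma v n i j = (if j < n then dist (v i) (v j) + dP v j n else 0)"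

definition alpha :: "(nat \<Rightarrow> 'a::metric_space) \<Rightarrow> nat \<Rightarrow> nat \<Rightarrow> nat \<Rightarrow> real" where
  "alpha v n i j = max (beta v i j) (gamma v n i j)"

definition jprime :: "(nat \<Rightarrow> 'a::metric_space) \<Rightarrow> nat \<Rightarrow> nat \<Rightarrow> nat" where
  "jprime v n i = (LEAST j. i \<le> j \<and> j \<le> n \<and> gamma v n i j \<le> beta v i j)"

end

theory Submission
  imports Defs
begin

text \<open>Adding the edge from \<open>v i\<close> to \<open>v j\<close> can only help the vertices up to \<open>v j\<close>, so
  \<open>beta v i j\<close> is nondecreasing in \<open>j\<close>, while by the triangle inequality \<open>gamma v n i j\<close> is
  nonincreasing in \<open>j\<close>. Hence \<open>alpha = max beta gamma\<close> equals \<open>gamma\<close> strictly before the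
  first index \<open>jprime v n i\<close> where \<open>gamma\<close> drops below \<open>beta\<close>, and equals \<open>beta\<close> from there on;
  so it is nonincreasing up to \<open>jprime v n i - 1\<close> and nondecreasing from \<open>jprime v n i\<close>.\<close>

lemma monotone_on_atLeastAtMost_nat_SucI:
  fixes f :: "nat \<Rightarrow> 'b"
  assumes "reflp R" and "transp R"
    and Suc_step: "\<And>k. i \<le> k \<Longrightarrow> Suc k \<le> n \<Longrightarrow> R (f k) (f (Suc k))"
  shows "monotone_on {i..n} (\<le>) R f"
proof (rule monotone_onI)
  fix j j' assume "j \<in> {i..n}" "j' \<in> {i..n}" "j \<le> j'"
  from \<open>j \<le> j'\<close> \<open>j' \<in> {i..n}\<close> show "R (f j) (f j')"
  proof (induction j' rule: dec_induct)
    case base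
    show ?case using \<open>reflp R\<close> by (simp add: reflpD)
  next
    case (step k)
    then show ?case using \<open>transp R\<close> \<open>j \<in> {i..n}\<close> Suc_step[of k]
      by (auto elim: transpE)
  qed
qed

lemma Min_max_mono_antimono_at_crossing:
  fixes f g :: "nat \<Rightarrow> 'b::linorder"
  assumes f: "mono_on {i..n} f" and g: "antimono_on {i..n} g"
    and J: "i \<le> J" "J \<le> n" "g J \<le> f J"
    and before_J: "\<And>j. i \<le> j \<Longrightarrow> j < J \<Longrightarrow> f j < g j"
  shows "Min ((\<lambda>j. max (f j) (g j)) ` {i..n}) =
         Min ((\<lambda>j. max (f j) (g j)) ` ({J - 1, J} \<inter> {i..n}))"
proof -
  define h where "h j = max (f j) (g j)" for j
  define S where "S = {J - 1, J} \<inter> {i..n}"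
  have "J \<in> S" "S \<subseteq> {i..n}" "finite S"
    using J by (auto simp: S_def)
  have "Min (h ` S) \<le> h j" if j: "j \<in> {i..n}" for j
  proof (cases "J \<le> j")
    case True
    have "Min (h ` S) \<le> h J" using \<open>J \<in> S\<close> \<open>finite S\<close> by simp
    also have "\<dots> = f J" using J by (simp add: h_def)
    also have "\<dots> \<le> f j" using f J j True by (auto intro: mono_onD)
    also have "\<dots> \<le> h j" by (simp add: h_def)
    finally show ?thesis .
  next
    case False
    then have "J - 1 \<in> S" "i \<le> J - 1" "J - 1 < J" using j J by (auto simp: S_def)
    have "Min (h ` S) \<le> h (J - 1)" using \<open>J - 1 \<in> S\<close> \<open>finite S\<close> by simp
    also have "\<dots> = g (J - 1)"
      using before_J[OF \<open>i \<le> J - 1\<close> \<open>J - 1 < J\<close>] by (simp add: h_def)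
    also have "\<dots> \<le> g j" using monotone_onD[OF g, of j "J - 1"] J j False by auto
    also have "\<dots> \<le> h j" by (simp add: h_def)
    finally show ?thesis .
  qed
  then have "Min (h ` S) \<le> Min (h ` {i..n})"
    using J by (intro Min.boundedI) auto
  moreover have "Min (h ` {i..n}) \<le> Min (h ` S)"
    using \<open>J \<in> S\<close> \<open>S \<subseteq> {i..n}\<close> by (intro Min_antimono) auto
  ultimately show ?thesis by (simp add: h_def[abs_def] S_def)
qed

lemma dP_same [simp]: "dP v i i = 0"
  by (simp add: dP_def)

lemma dP_nonneg: "0 \<le> dP v i j"
  by (simp add: dP_def sum_nonneg)

lemma dP_Suc_right: "k \<le> j \<Longrightarrow> dP v k (Suc j) = dP v k j + dist (v j) (v (Suc j))"
  by (simp add: dP_def)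

lemma dP_Suc_left: "Suc j \<le> n \<Longrightarrow> dP v j n = dist (v j) (v (Suc j)) + dP v (Suc j) n"
  by (simp add: dP_def sum.atLeast_Suc_lessThan)

lemma beta_nonneg: "i \<le> j \<Longrightarrow> 0 \<le> beta v i j"
proof -
  assume "i \<le> j"
  then have "min (dP v i i) (dist (v i) (v j) + dP v i j) \<le> beta v i j"
    unfolding beta_def by (intro Max_ge) (auto intro!: image_eqI[where x = i])
  then show ?thesis using dP_nonneg[of v i j] by simp
qed

lemma beta_le_beta_Suc: "i \<le> j \<Longrightarrow> beta v i j \<le> beta v i (Suc j)"
proof -
  assume "i \<le> j"
  define t where "t j k = min (dP v i k) (dist (v i) (v j) + dP v k j)" for j k
  have "t j k \<le> t (Suc j) k" if "k \<in> {i..j}" for k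
  proof -
    have "dist (v i) (v j) \<le> dist (v i) (v (Suc j)) + dist (v j) (v (Suc j))"
      using dist_triangle[of "v i" "v j" "v (Suc j)"] by (simp add: dist_commute)
    then show ?thesis using that dP_Suc_right[of k j v] by (auto simp: t_def)
  qed
  also have "t (Suc j) k \<le> Max (t (Suc j) ` {i..Suc j})" if "k \<in> {i..j}" for k
    using that by (intro Max_ge) auto
  finally have "Max (t j ` {i..j}) \<le> Max (t (Suc j) ` {i..Suc j})"
    using \<open>i \<le> j\<close> by (intro Max.boundedI) auto
  then show ?thesis by (simp add: beta_def t_def)
qed

lemma gamma_Suc_le_gamma: "Suc j \<le> n \<Longrightarrow> gamma v n i (Suc j) \<le> gamma v n i j"
  using dist_triangle[of "v i" "v (Suc j)" "v j"] dP_nonneg[of v j n] dP_Suc_left[of j n v]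
  by (auto simp: gamma_def)

theorem mainTheorem7:
  fixes v :: "nat \<Rightarrow> 'a::metric_space" and n i :: nat
  assumes "inj_on v {1..n}"
    and "1 \<le> i" and "i \<le> n"
  shows "Min (alpha v n i ` {i..n}) =
         Min (alpha v n i ` ({jprime v n i - 1, jprime v n i} \<inter> {i..n}))"
proof -
  let ?crossed = "\<lambda>j. i \<le> j \<and> j \<le> n \<and> gamma v n i j \<le> beta v i j"
  have "?crossed n" using \<open>i \<le> n\<close> beta_nonneg[of i n v] by (simp add: gamma_def)
  then have "?crossed (jprime v n i)"
    unfolding jprime_def by (rule LeastI)
  moreover have "beta v i j < gamma v n i j" if "i \<le> j" "j < jprime v n i" for j
    using not_less_Least[of j ?crossed] that \<open>?crossed (jprime v n i)\<close>
    by (auto simp: jprime_def)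
  moreover have "mono_on {i..n} (beta v i)"
    by (rule monotone_on_atLeastAtMost_nat_SucI) (auto intro: beta_le_beta_Suc transpI)
  moreover have "antimono_on {i..n} (gamma v n i)"
    by (rule monotone_on_atLeastAtMost_nat_SucI) (auto intro: gamma_Suc_le_gamma transpI)
  ultimately show ?thesis
    unfolding alpha_def[abs_def] by (intro Min_max_mono_antimono_at_crossing) auto
qed

end
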